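(* Consider $\Gamma_T(p,q)$ and its dual games. Let $x^*$ be the realization plan of a security strategy of player 1 in $\Gamma_T(p,q)$ and $\nu^{*l}=-u_{l,0}(x^* )$ for $l\in L$. Then player 1's security strategy $\tilde\sigma^*$ in the type-2 dual game $\tilde\Gamma^2_T(p,\nu^* )$, which at stage $t$ depends only on $(t,p_t,\nu_t)$, is also a security strategy of player 1 in $\Gamma_T(p,q)$. Similarly, let $y^*$ be the realization plan of a security strategy of player 2 in $\Gamma_T(p,q)$ and $\mu^{*k}=-w_{k,0}(y^* )$ for $k\in K$; then player 2's security strategy $\tilde\tau^*$ in $\tilde\Gamma^1_T(\mu^*,q)$, which at stage $t$ depends only on $(t,\mu_t,q_t)$, is also a security strategy of player 2 in $\Gamma_T(p,q)$.
   Context: Setting: nonempty finite type sets $K,L$, action sets $A,B$, payoff $M:K\times L\times A\times B\to\mathbb R$ ($M^{kl}_{a,b}=M(k,l,a,b)$), $p\in\Delta(K),q\in\Delta(L)$ with positive entries. In $\Gamma_T(p,q)$, $k\sim p$, $l\sim q$ drawn independently, told privately to players 1, 2; $T$ stages of simultaneous, publicly announced actions; behavior strategies depend on own type and both histories; payoff $\mathbb E[\sum_{t=1}^TM(k,l,a_t,b_t)]$ to player 1 (maximizer); security strategies attain $\max_\sigma\min_\tau$ resp. $\min_\tau\max_\sigma$ of the payoff. Realization plan of $\sigma$: $x^{a_t}_{k,h_t^A,h_t^B}=p^k\prod_{s=1}^t\sigma_s^{a_s}(k,h_s^A,h_s^B)$; $u_{l,0}(x)=\min_{\tau(l)}\sum_kp^k\mathbb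 E_{\sigma,\tau(l)}[\sum_{s=1}^TM\mid k,l]$; for a realization plan $y$ of $\tau$, $w_{k,0}(y)=\max_{\sigma(k)}\sum_lq^l\mathbb E_{\sigma(k),\tau}[\sum_{s=1}^TM\mid k,l]$. Dual games: $\tilde\Gamma^1_T(\mu,q)$: player 1 chooses $k$ himself, $l\sim q$ by nature, payoff $\mathbb E[\mu^k+\sum_{t=1}^TM]$; $\tilde\Gamma^2_T(p,\nu)$: $k\sim p$ by nature, player 2 chooses $l$ himself, payoff $\mathbb E[\nu^l+\sum_{t=1}^TM]$. Statistics: in $\tilde\Gamma^2_T(p,\nu)$, with $r_t^k=\sigma_t(k,h_t^A,h_t^B)$, $p_1=p$, $\nu_1=\nu$, $p^k_{t+1}=p_t^kr_t^k(a_t)/\sum_{k'}p_t^{k'}r_t^{k'}(a_t)$, $\nu^l_{t+1}=\nu^l_t+\sum_kp^k_{t+1}M^{kl}_{a_t,b_t}$; in $\tilde\Gamma^1_T(\mu,q)$, with $z_t^l=\tau_t(l,h_t^A,h_t^B)$, $q_1=q$, $\mu_1=\mu$, $q^l_{t+1}=q^l_tz^l_t(b_t)/\sum_{l'}q_t^{l'}z_t^{l'}(b_t)$, $\mu^k_{t+1}=\mu^k_t+\sum_lq^l_{t+1}M^{kl}_{a_t,b_t}$. *)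

theory Defs
  imports Main "HOL.Real"
begin

text \<open>
  Type sets K, L and action sets A, B are finite types 'k, 'l, 'a, 'b.
  Histories: h^A :: 'a list, h^B :: 'b list (actions of previous stages);
  at stage t (counted from 0 here) both have length t.
\<close>

definition is_dist :: "('x::finite \<Rightarrow> real) \<Rightarrow> bool" where
  "is_dist f \<longleftrightarrow> (\<forall>x. 0 \<le> f x) \<and> sum f UNIV = 1"

definition valid1 :: "('k \<Rightarrow> 'a list \<Rightarrow> 'b list \<Rightarrow> 'a::finite \<Rightarrow> real) \<Rightarrow> bool" where
  "valid1 \<sigma> \<longleftrightarrow> (\<forall>k hA hB. is_dist (\<sigma> k hA hB))"

definition valid2 :: "('l \<Rightarrow> 'a list \<Rightarrow> 'b list \<Rightarrow> 'b::finite \<Rightarrow> real) \<Rightarrow> bool" where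
  "valid2 \<tau> \<longleftrightarrow> (\<forall>l hA hB. is_dist (\<tau> l hA hB))"

text \<open>Conditional expected payoff of the remaining n stages given types k, l
  and current histories hA, hB.\<close>
fun cpay :: "('k \<Rightarrow> 'l \<Rightarrow> 'a::finite \<Rightarrow> 'b::finite \<Rightarrow> real) \<Rightarrow>
    ('k \<Rightarrow> 'a list \<Rightarrow> 'b list \<Rightarrow> 'a \<Rightarrow> real) \<Rightarrow>
    ('l \<Rightarrow> 'a list \<Rightarrow> 'b list \<Rightarrow> 'b \<Rightarrow> real) \<Rightarrow>
    'k \<Rightarrow> 'l \<Rightarrow> nat \<Rightarrow> 'a list \<Rightarrow> 'b list \<Rightarrow> real" where
  "cpay M \<sigma> \<tau> k l 0 hA hB = 0"
| "cpay M \<sigma> \<tau> k l (Suc n) hA hB =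
     (\<Sum>a\<in>UNIV. \<Sum>b\<in>UNIV. \<sigma> k hA hB a * \<tau> l hA hB b *
        (M k l a b + cpay M \<sigma> \<tau> k l n (hA @ [a]) (hB @ [b])))"

definition payoff :: "('k::finite \<Rightarrow> 'l::finite \<Rightarrow> 'a::finite \<Rightarrow> 'b::finite \<Rightarrow> real) \<Rightarrow> nat \<Rightarrow>
    ('k \<Rightarrow> real) \<Rightarrow> ('l \<Rightarrow> real) \<Rightarrow>
    ('k \<Rightarrow> 'a list \<Rightarrow> 'b list \<Rightarrow> 'a \<Rightarrow> real) \<Rightarrow>
    ('l \<Rightarrow> 'a list \<Rightarrow> 'b list \<Rightarrow> 'b \<Rightarrow> real) \<Rightarrow> real" where
  "payoff M T p q \<sigma> \<tau> = (\<Sum>k\<in>UNIV. \<Sum>l\<in>UNIV. p k * q l * cpay M \<sigma> \<tau> k l T [] [])"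

definition security1 where
  "security1 M T p q \<sigma> \<longleftrightarrow> valid1 \<sigma> \<and>
     (INF \<tau>\<in>{\<tau>. valid2 \<tau>}. payoff M T p q \<sigma> \<tau>) =
     (SUP \<sigma>'\<in>{\<sigma>'. valid1 \<sigma>'}. INF \<tau>\<in>{\<tau>. valid2 \<tau>}. payoff M T p q \<sigma>' \<tau>)"

definition security2 where
  "security2 M T p q \<tau> \<longleftrightarrow> valid2 \<tau> \<and>
     (SUP \<sigma>\<in>{\<sigma>. valid1 \<sigma>}. payoff M T p q \<sigma> \<tau>) =
     (INF \<tau>'\<in>{\<tau>'. valid2 \<tau>'}. SUP \<sigma>\<in>{\<sigma>. valid1 \<sigma>}. payoff M T p q \<sigma> \<tau>')"

text \<open>u_{l,0}(x) for the realization plan x of sigma (it depends on sigma only via x):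
  min over strategies tau(l) of type l of sum_k p^k E[sum M | k,l].\<close>
definition u0 where
  "u0 M T p \<sigma> l = (INF \<tau>l\<in>{\<tau>l. \<forall>hA hB. is_dist (\<tau>l hA hB)}.
      \<Sum>k\<in>UNIV. p k * cpay M \<sigma> (\<lambda>_. \<tau>l) k l T [] [])"

definition w0 where
  "w0 M T q \<tau> k = (SUP \<sigma>k\<in>{\<sigma>k. \<forall>hA hB. is_dist (\<sigma>k hA hB)}.
      \<Sum>l\<in>UNIV. q l * cpay M (\<lambda>_. \<sigma>k) \<tau> k l T [] [])"

text \<open>Dual game of type 2, tilde Gamma^2_T(p,nu): k ~ p by nature, player 2 chooses l
  himself (possibly at random, with distribution pi) and a strategy tau.\<close>
definition dpay2 where
  "dpay2 M T p \<nu> \<sigma> \<pi> \<tau> = (\<Sum>k\<in>UNIV. \<Sum>l\<in>UNIV. p k * \<pi> l * (\<nu> l + cpay M \<sigma> \<tau> k l T [] []))"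

definition dual_security1 where
  "dual_security1 M T p \<nu> \<sigma> \<longleftrightarrow> valid1 \<sigma> \<and>
     (INF z\<in>{\<pi>. is_dist \<pi>} \<times> {\<tau>. valid2 \<tau>}. dpay2 M T p \<nu> \<sigma> (fst z) (snd z)) =
     (SUP \<sigma>'\<in>{\<sigma>'. valid1 \<sigma>'}. INF z\<in>{\<pi>. is_dist \<pi>} \<times> {\<tau>. valid2 \<tau>}.
          dpay2 M T p \<nu> \<sigma>' (fst z) (snd z))"

text \<open>Dual game of type 1, tilde Gamma^1_T(mu,q): player 1 chooses k himself (with
  distribution rho) and a strategy sigma, l ~ q by nature.\<close>
definition dpay1 where
  "dpay1 M T \<mu> q \<rho> \<sigma> \<tau> = (\<Sum>k\<in>UNIV. \<Sum>l\<in>UNIV. \<rho> k * q l * (\<mu> k + cpay M \<sigma> \<tau> k l T [] []))"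

definition dual_security2 where
  "dual_security2 M T \<mu> q \<tau> \<longleftrightarrow> valid2 \<tau> \<and>
     (SUP z\<in>{\<rho>. is_dist \<rho>} \<times> {\<sigma>. valid1 \<sigma>}. dpay1 M T \<mu> q (fst z) (snd z) \<tau>) =
     (INF \<tau>'\<in>{\<tau>'. valid2 \<tau>'}. SUP z\<in>{\<rho>. is_dist \<rho>} \<times> {\<sigma>. valid1 \<sigma>}.
          dpay1 M T \<mu> q (fst z) (snd z) \<tau>')"

text \<open>Statistics (p_t, nu_t) in tilde Gamma^2 along histories hA, hB (stage t = 0 here
  corresponds to t = 1 in the paper). Division by 0 yields 0 (Isabelle convention).\<close>
fun stat2 :: "('k::finite \<Rightarrow> 'l::finite \<Rightarrow> 'a::finite \<Rightarrow> 'b::finite \<Rightarrow> real) \<Rightarrow>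
    ('k \<Rightarrow> 'a list \<Rightarrow> 'b list \<Rightarrow> 'a \<Rightarrow> real) \<Rightarrow> ('k \<Rightarrow> real) \<Rightarrow> ('l \<Rightarrow> real) \<Rightarrow>
    nat \<Rightarrow> 'a list \<Rightarrow> 'b list \<Rightarrow> ('k \<Rightarrow> real) \<times> ('l \<Rightarrow> real)" where
  "stat2 M \<sigma> p \<nu> 0 hA hB = (p, \<nu>)"
| "stat2 M \<sigma> p \<nu> (Suc t) hA hB =
     (let pt = fst (stat2 M \<sigma> p \<nu> t hA hB);
          \<nu>t = snd (stat2 M \<sigma> p \<nu> t hA hB);
          a = hA ! t; b = hB ! t;
          r = (\<lambda>k. \<sigma> k (take t hA) (take t hB) a);
          den = (\<Sum>k'\<in>UNIV. pt k' * r k');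
          p' = (\<lambda>k. pt k * r k / den)
      in (p', \<lambda>l. \<nu>t l + (\<Sum>k\<in>UNIV. p' k * M k l a b)))"

fun stat1 :: "('k::finite \<Rightarrow> 'l::finite \<Rightarrow> 'a::finite \<Rightarrow> 'b::finite \<Rightarrow> real) \<Rightarrow>
    ('l \<Rightarrow> 'a list \<Rightarrow> 'b list \<Rightarrow> 'b \<Rightarrow> real) \<Rightarrow> ('k \<Rightarrow> real) \<Rightarrow> ('l \<Rightarrow> real) \<Rightarrow>
    nat \<Rightarrow> 'a list \<Rightarrow> 'b list \<Rightarrow> ('k \<Rightarrow> real) \<times> ('l \<Rightarrow> real)" where
  "stat1 M \<tau> \<mu> q 0 hA hB = (\<mu>, q)"
| "stat1 M \<tau> \<mu> q (Suc t) hA hB =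
     (let \<mu>t = fst (stat1 M \<tau> \<mu> q t hA hB);
          qt = snd (stat1 M \<tau> \<mu> q t hA hB);
          a = hA ! t; b = hB ! t;
          z = (\<lambda>l. \<tau> l (take t hA) (take t hB) b);
          den = (\<Sum>l'\<in>UNIV. qt l' * z l');
          q' = (\<lambda>l. qt l * z l / den)
      in (\<lambda>k. \<mu>t k + (\<Sum>l\<in>UNIV. q' l * M k l a b), q'))"

definition markov1 where
  "markov1 M T p \<nu> \<sigma> \<longleftrightarrow> (\<exists>f. \<forall>hA hB k. length hA = length hB \<and> length hA < T \<longrightarrow>
      \<sigma> k hA hB = f (length hA) (fst (stat2 M \<sigma> p \<nu> (length hA) hA hB))
                                 (snd (stat2 M \<sigma> p \<nu> (length hA) hA hB)) k)"

definition markov2 where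
  "markov2 M T \<mu> q \<tau> \<longleftrightarrow> (\<exists>g. \<forall>hA hB l. length hA = length hB \<and> length hA < T \<longrightarrow>
      \<tau> l hA hB = g (length hA) (fst (stat1 M \<tau> \<mu> q (length hA) hA hB))
                                 (snd (stat1 M \<tau> \<mu> q (length hA) hA hB)) l)"

end

theory Submission
  imports Defs
begin

text \<open>
  Against a fixed strategy of player 1, player 2 can best-respond type by type, so the amount
  player 1 guarantees in \<open>\<Gamma>\<^sub>T(p,q)\<close> is the \<open>q\<close>-average of the type-wise guarantees
  \<open>u\<^sub>l(\<sigma>)\<close>, while in the dual game, where player 2 picks his type, it is
  \<open>min\<^sub>l (\<nu>\<^sup>l + u\<^sub>l(\<sigma>))\<close>.
  With \<open>\<nu> = -u(\<sigma>\<^sup>*)\<close> the dual value is \<open>0\<close>, attained by \<open>\<sigma>\<^sup>*\<close>; hence a dual security strategy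
  \<open>\<tilde>\<sigma>\<close> satisfies \<open>u\<^sub>l(\<tilde>\<sigma>) \<ge> u\<^sub>l(\<sigma>\<^sup>*)\<close> for every \<open>l\<close>, and so guarantees at least as much as
  \<open>\<sigma>\<^sup>*\<close> in the primal game. Player 2's half is the same argument for the negated payoff.
\<close>

lemma is_dist_uniform: "is_dist (\<lambda>_::'x::finite. 1 / real (card (UNIV :: 'x set)))"
  by (simp add: is_dist_def)

lemma is_dist_point: "is_dist (\<lambda>x. if x = y then 1 else (0::real))"
  by (simp add: is_dist_def)

lemma sum_point_mult: "(\<Sum>x\<in>(UNIV :: 'x::finite set). (if x = y then 1 else 0) * f x) = (f y :: real)"
  by (subst sum.cong[OF refl, of _ _ "\<lambda>x. if x = y then f x else 0"]) simp_all

lemma is_dist_sum_mult_const: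
  "is_dist p \<Longrightarrow> (\<Sum>x\<in>UNIV. p x * c) = c"
  by (simp add: is_dist_def flip: sum_distrib_right)

lemma is_dist_sum_mono:
  assumes "is_dist p" "\<And>x. f x \<le> g x"
  shows "(\<Sum>x\<in>UNIV. p x * f x) \<le> (\<Sum>x\<in>UNIV. p x * g x)"
  using assms by (auto simp: is_dist_def intro!: sum_mono mult_left_mono)

lemma is_dist_abs_sum_le:
  assumes "is_dist p" "\<And>x. \<bar>c x\<bar> \<le> D"
  shows "\<bar>\<Sum>x\<in>UNIV. p x * c x\<bar> \<le> D"
proof -
  have lower: "- D \<le> c x" and upper: "c x \<le> D" for x
    using assms(2)[of x] by linarith+
  have "(\<Sum>x\<in>UNIV. p x * - D) \<le> (\<Sum>x\<in>UNIV. p x * c x)"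
    by (rule is_dist_sum_mono[OF assms(1) lower])
  moreover have "(\<Sum>x\<in>UNIV. p x * c x) \<le> (\<Sum>x\<in>UNIV. p x * D)"
    by (rule is_dist_sum_mono[OF assms(1) upper])
  ultimately show ?thesis
    unfolding is_dist_sum_mult_const[OF assms(1)] by (simp add: abs_le_iff)
qed

lemma SUP_uminus_real: "(SUP x\<in>A. - f x) = - (INF x\<in>A. f x :: real)"
  by (simp add: Inf_real_def image_image)

lemma INF_uminus_real: "(INF x\<in>A. - f x) = - (SUP x\<in>A. f x :: real)"
  by (simp add: Inf_real_def image_image)

text \<open>
  An abstract maximiser with strategies \<open>S\<close> faces an opponent who first learns his type
  \<open>l \<sim> q\<close> and then plays some \<open>y \<in> Y\<close>; \<open>v s l y\<close> is the maximiser's expected payoff.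
\<close>

locale typewise_game =
  fixes S :: "'s set" and Y :: "'y set" and v :: "'s \<Rightarrow> 'l::finite \<Rightarrow> 'y \<Rightarrow> real"
    and q :: "'l \<Rightarrow> real" and C :: real
  assumes Y_nonempty: "Y \<noteq> {}"
    and q_dist: "is_dist q"
    and abs_v_le: "\<And>s l y. s \<in> S \<Longrightarrow> y \<in> Y \<Longrightarrow> \<bar>v s l y\<bar> \<le> C"
begin

definition type_value :: "'s \<Rightarrow> 'l \<Rightarrow> real" where
  "type_value s l = (INF y\<in>Y. v s l y)"

definition guarantee :: "'s \<Rightarrow> real" where
  "guarantee s = (INF \<tau>\<in>{\<tau>. \<forall>l. \<tau> l \<in> Y}. \<Sum>l\<in>UNIV. q l * v s l (\<tau> l))"

definition dual_guarantee :: "('l \<Rightarrow> real) \<Rightarrow> 's \<Rightarrow> real" where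
  "dual_guarantee \<nu> s = (INF z\<in>{\<pi>. is_dist \<pi>} \<times> {\<tau>. \<forall>l. \<tau> l \<in> Y}.
     \<Sum>l\<in>UNIV. fst z l * (\<nu> l + v s l (snd z l)))"

lemma type_value_le: "s \<in> S \<Longrightarrow> y \<in> Y \<Longrightarrow> type_value s l \<le> v s l y"
  unfolding type_value_def
  by (rule cINF_lower) (auto intro!: bdd_belowI2[where m="- C"] dest: abs_v_le[of s _ l] simp: abs_le_iff)

lemma le_type_value: "(\<And>y. y \<in> Y \<Longrightarrow> c \<le> v s l y) \<Longrightarrow> c \<le> type_value s l"
  unfolding type_value_def using Y_nonempty by (rule cINF_greatest)

lemma type_value_le_bound:
  assumes "s \<in> S"
  shows "type_value s l \<le> C"
proof -
  obtain y where "y \<in> Y"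
    using Y_nonempty by blast
  then show ?thesis
    using assms type_value_le[of s y l] abs_v_le[of s y l] by (simp add: abs_le_iff)
qed

lemma profiles_nonempty: "{\<tau>. \<forall>l. \<tau> l \<in> Y} \<noteq> {}"
proof -
  obtain y where "y \<in> Y"
    using Y_nonempty by blast
  then have "(\<lambda>_. y) \<in> {\<tau>. \<forall>l. \<tau> l \<in> Y}"
    by simp
  then show ?thesis
    by (metis empty_iff)
qed

lemma guarantee_eq_sum_type_value:
  assumes s: "s \<in> S"
  shows "guarantee s = (\<Sum>l\<in>UNIV. q l * type_value s l)"
proof -
  let ?P = "{\<tau>. \<forall>l. \<tau> l \<in> Y}"
  let ?f = "\<lambda>\<tau>. \<Sum>l\<in>UNIV. q l * v s l (\<tau> l)"
  let ?g = "\<Sum>l\<in>UNIV. q l * type_value s l"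
  have lower: "?g \<le> ?f \<tau>" if "\<tau> \<in> ?P" for \<tau>
    using that s by (intro is_dist_sum_mono[OF q_dist] type_value_le) auto
  then have bdd: "bdd_below (?f ` ?P)"
    by (rule bdd_belowI2)
  have "?g \<le> guarantee s"
    unfolding guarantee_def using profiles_nonempty lower by (rule cINF_greatest)
  moreover have "guarantee s \<le> ?g + e" if e: "0 < e" for e
  proof -
    have "\<exists>y\<in>Y. v s l y < type_value s l + e" for l
    proof -
      have "bdd_below (v s l ` Y)"
        using type_value_le[OF s] by (rule bdd_belowI2)
      then show ?thesis
        using e Y_nonempty cINF_less_iff[of Y "v s l" "type_value s l + e"]
        unfolding type_value_def by simp
    qed
    then obtain \<tau> where \<tau>: "\<And>l. \<tau> l \<in> Y" "\<And>l. v s l (\<tau> l) < type_value s l + e"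
      by metis
    have "guarantee s \<le> ?f \<tau>"
      unfolding guarantee_def using \<tau>(1) by (intro cINF_lower[OF bdd]) simp
    also have "\<dots> \<le> (\<Sum>l\<in>UNIV. q l * (type_value s l + e))"
      using \<tau>(2) by (intro is_dist_sum_mono[OF q_dist] less_imp_le)
    also have "\<dots> = ?g + e"
      using is_dist_sum_mult_const[OF q_dist] by (simp add: distrib_left sum.distrib)
    finally show ?thesis .
  qed
  then have "guarantee s \<le> ?g"
    by (rule field_le_epsilon)
  ultimately show ?thesis
    by (rule antisym[rotated])
qed

lemma dual_guarantee_eq_Min:
  assumes s: "s \<in> S"
  shows "dual_guarantee \<nu> s = Min (range (\<lambda>l. \<nu> l + type_value s l))"
proof -
  let ?D = "{\<pi> :: 'l \<Rightarrow> real. is_dist \<pi>} \<times> {\<tau>. \<forall>l. \<tau> l \<in> Y}"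
  let ?f = "\<lambda>z. \<Sum>l\<in>UNIV. fst z l * (\<nu> l + v s l (snd z l))"
  let ?m = "Min (range (\<lambda>l. \<nu> l + type_value s l))"
  have lower: "?m \<le> ?f z" if "z \<in> ?D" for z
  proof -
    have "?m \<le> \<nu> l + v s l (snd z l)" for l
    proof -
      have "?m \<le> \<nu> l + type_value s l"
        by simp
      also have "type_value s l \<le> v s l (snd z l)"
        using that s by (intro type_value_le) (auto simp: mem_Times_iff)
      finally show ?thesis
        by simp
    qed
    then have "(\<Sum>l\<in>UNIV. fst z l * ?m) \<le> ?f z"
      using that by (intro is_dist_sum_mono) auto
    then show ?thesis
      using that is_dist_sum_mult_const[of "fst z" ?m] by (auto simp: mem_Times_iff)
  qed
  have bdd: "bdd_below (?f ` ?D)"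
    using lower by (rule bdd_belowI2)
  have "?D \<noteq> {}"
    using profiles_nonempty q_dist by auto
  then have "?m \<le> dual_guarantee \<nu> s"
    unfolding dual_guarantee_def using lower by (rule cINF_greatest)
  moreover have "dual_guarantee \<nu> s \<le> \<nu> l + type_value s l" for l
  proof -
    have "dual_guarantee \<nu> s \<le> \<nu> l + v s l y" if "y \<in> Y" for y
    proof -
      let ?z = "(\<lambda>x. if x = l then 1 else 0, \<lambda>_. y)"
      have "?z \<in> ?D"
        using that is_dist_point by auto
      then have "dual_guarantee \<nu> s \<le> ?f ?z"
        unfolding dual_guarantee_def by (rule cINF_lower[OF bdd])
      then show ?thesis
        by (simp add: sum_point_mult)
    qed
    then have "dual_guarantee \<nu> s - \<nu> l \<le> type_value s l"
      by (intro le_type_value) (simp add: algebra_simps)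
    then show ?thesis
      by simp
  qed
  moreover have "?m \<in> range (\<lambda>l. \<nu> l + type_value s l)"
    by (rule Min_in) simp_all
  then obtain l where "?m = \<nu> l + type_value s l"
    by blast
  ultimately show ?thesis
    by (metis antisym)
qed

theorem dual_optimal_imp_optimal:
  assumes \<sigma>s: "\<sigma>s \<in> S" "guarantee \<sigma>s = (SUP s\<in>S. guarantee s)"
    and \<sigma>d: "\<sigma>d \<in> S"
      "dual_guarantee (\<lambda>l. - type_value \<sigma>s l) \<sigma>d
         = (SUP s\<in>S. dual_guarantee (\<lambda>l. - type_value \<sigma>s l) s)"
  shows "guarantee \<sigma>d = (SUP s\<in>S. guarantee s)"
proof -
  let ?\<nu> = "\<lambda>l. - type_value \<sigma>s l"
  fix l0 :: 'l
  have "dual_guarantee ?\<nu> s \<le> ?\<nu> l0 + C" if "s \<in> S" for s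
  proof -
    have "dual_guarantee ?\<nu> s \<le> ?\<nu> l0 + type_value s l0"
      using that by (simp add: dual_guarantee_eq_Min)
    then show ?thesis
      using type_value_le_bound[OF that, of l0] by linarith
  qed
  then have "bdd_above (dual_guarantee ?\<nu> ` S)"
    by (rule bdd_aboveI2)
  then have "dual_guarantee ?\<nu> \<sigma>s \<le> dual_guarantee ?\<nu> \<sigma>d"
    unfolding \<sigma>d(2) by (rule cSUP_upper[OF \<sigma>s(1)])
  then have "0 \<le> Min (range (\<lambda>l. type_value \<sigma>d l - type_value \<sigma>s l))"
    using \<sigma>s(1) \<sigma>d(1) by (simp add: dual_guarantee_eq_Min)
  then have "type_value \<sigma>s l \<le> type_value \<sigma>d l" for l
    by simp
  then have "guarantee \<sigma>s \<le> guarantee \<sigma>d"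
    unfolding guarantee_eq_sum_type_value[OF \<sigma>s(1)] guarantee_eq_sum_type_value[OF \<sigma>d(1)]
    by (rule is_dist_sum_mono[OF q_dist])
  moreover have "guarantee s \<le> C" if "s \<in> S" for s
  proof -
    have "guarantee s \<le> (\<Sum>l\<in>UNIV. q l * C)"
      unfolding guarantee_eq_sum_type_value[OF that]
      by (rule is_dist_sum_mono[OF q_dist type_value_le_bound[OF that]])
    then show ?thesis
      by (simp add: is_dist_sum_mult_const[OF q_dist])
  qed
  then have "guarantee \<sigma>d \<le> (SUP s\<in>S. guarantee s)"
    by (intro cSUP_upper[OF \<sigma>d(1)] bdd_aboveI2)
  ultimately show ?thesis
    using \<sigma>s(2) by linarith
qed

end

definition max_abs_payoff :: "('k::finite \<Rightarrow> 'l::finite \<Rightarrow> 'a::finite \<Rightarrow> 'b::finite \<Rightarrow> real) \<Rightarrow> real" where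
  "max_abs_payoff M = Max (range (\<lambda>(k, l, a, b). \<bar>M k l a b\<bar>))"

lemma abs_le_max_abs_payoff: "\<bar>M k l a b\<bar> \<le> max_abs_payoff M"
  unfolding max_abs_payoff_def by (rule Max_ge) (auto intro!: image_eqI[where x="(k, l, a, b)"])

lemma abs_cpay_le:
  assumes "valid1 \<sigma>" "valid2 \<tau>"
  shows "\<bar>cpay M \<sigma> \<tau> k l n hA hB\<bar> \<le> real n * max_abs_payoff M"
proof (induction n arbitrary: hA hB)
  case 0
  then show ?case by simp
next
  case (Suc n)
  have "\<bar>M k l a b + cpay M \<sigma> \<tau> k l n (hA @ [a]) (hB @ [b])\<bar> \<le> real (Suc n) * max_abs_payoff M"
    for a b
    using abs_le_max_abs_payoff[of M k l a b] Suc.IH[of "hA @ [a]" "hB @ [b]"]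
    by (simp add: algebra_simps)
  then have "\<bar>\<Sum>a\<in>UNIV. \<sigma> k hA hB a * (\<Sum>b\<in>UNIV. \<tau> l hA hB b *
      (M k l a b + cpay M \<sigma> \<tau> k l n (hA @ [a]) (hB @ [b])))\<bar> \<le> real (Suc n) * max_abs_payoff M"
    using assms by (intro is_dist_abs_sum_le) (auto simp: valid1_def valid2_def)
  then show ?case
    by (simp add: sum_distrib_left mult.assoc)
qed

lemma cpay_player1_own_type: "cpay M \<sigma> \<tau> k l n hA hB = cpay M (\<lambda>_. \<sigma> k) \<tau> k l n hA hB"
  by (induction n arbitrary: hA hB) auto

lemma cpay_player2_own_type: "cpay M \<sigma> \<tau> k l n hA hB = cpay M \<sigma> (\<lambda>_. \<tau> l) k l n hA hB"
  by (induction n arbitrary: hA hB) auto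

lemma payoff_eq_sum_player2_types:
  "payoff M T p q \<sigma> \<tau> = (\<Sum>l\<in>UNIV. q l * (\<Sum>k\<in>UNIV. p k * cpay M \<sigma> (\<lambda>_. \<tau> l) k l T [] []))"
  unfolding payoff_def
  by (subst sum.swap) (simp add: sum_distrib_left cpay_player2_own_type[of M \<sigma> \<tau>] mult.assoc mult.left_commute)

lemma payoff_eq_sum_player1_types:
  "payoff M T p q \<sigma> \<tau> = (\<Sum>k\<in>UNIV. p k * (\<Sum>l\<in>UNIV. q l * cpay M (\<lambda>_. \<sigma> k) \<tau> k l T [] []))"
  unfolding payoff_def by (simp add: sum_distrib_left cpay_player1_own_type[of M \<sigma> \<tau>] mult.assoc)

lemma dpay2_eq_sum_types:
  assumes "is_dist p"
  shows "dpay2 M T p \<nu> \<sigma> \<pi> \<tau>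
    = (\<Sum>l\<in>UNIV. \<pi> l * (\<nu> l + (\<Sum>k\<in>UNIV. p k * cpay M \<sigma> (\<lambda>_. \<tau> l) k l T [] [])))"
proof -
  have "dpay2 M T p \<nu> \<sigma> \<pi> \<tau> = (\<Sum>l\<in>UNIV. \<Sum>k\<in>UNIV. p k * \<pi> l * (\<nu> l + cpay M \<sigma> \<tau> k l T [] []))"
    unfolding dpay2_def by (rule sum.swap)
  also have "\<dots> = (\<Sum>l\<in>UNIV. \<pi> l * (\<nu> l * (\<Sum>k\<in>UNIV. p k)
      + (\<Sum>k\<in>UNIV. p k * cpay M \<sigma> (\<lambda>_. \<tau> l) k l T [] [])))"
    by (simp add: sum_distrib_left sum_distrib_right sum.distrib algebra_simps cpay_player2_own_type[of M \<sigma> \<tau>])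
  finally show ?thesis
    using assms by (simp add: is_dist_def)
qed

lemma dpay1_eq_sum_types:
  assumes "is_dist q"
  shows "dpay1 M T \<mu> q \<rho> \<sigma> \<tau>
    = (\<Sum>k\<in>UNIV. \<rho> k * (\<mu> k + (\<Sum>l\<in>UNIV. q l * cpay M (\<lambda>_. \<sigma> k) \<tau> k l T [] [])))"
proof -
  have "dpay1 M T \<mu> q \<rho> \<sigma> \<tau> = (\<Sum>k\<in>UNIV. \<rho> k * (\<mu> k * (\<Sum>l\<in>UNIV. q l)
      + (\<Sum>l\<in>UNIV. q l * cpay M (\<lambda>_. \<sigma> k) \<tau> k l T [] [])))"
    unfolding dpay1_def
    by (simp add: sum_distrib_left sum_distrib_right sum.distrib algebra_simps cpay_player1_own_type[of M \<sigma> \<tau>])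
  then show ?thesis
    using assms by (simp add: is_dist_def)
qed

lemma dual_security1_imp_security1:
  fixes M :: "'k::finite \<Rightarrow> 'l::finite \<Rightarrow> 'a::finite \<Rightarrow> 'b::finite \<Rightarrow> real"
  assumes p: "is_dist p" and q: "is_dist q"
    and sec: "security1 M T p q \<sigma>s"
    and dual: "dual_security1 M T p (\<lambda>l. - u0 M T p \<sigma>s l) \<sigma>d"
  shows "security1 M T p q \<sigma>d"
proof -
  let ?Y = "{\<tau>l :: 'a list \<Rightarrow> 'b list \<Rightarrow> 'b \<Rightarrow> real. \<forall>hA hB. is_dist (\<tau>l hA hB)}"
  define v where "v \<sigma> l \<tau>l = (\<Sum>k\<in>UNIV. p k * cpay M \<sigma> (\<lambda>_. \<tau>l) k l T [] [])"
    for \<sigma> and l :: 'l and \<tau>l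
  interpret G: typewise_game "{\<sigma>. valid1 \<sigma>}" ?Y v q "real T * max_abs_payoff M"
  proof
    have "(\<lambda>_ _. \<lambda>_. 1 / real (card (UNIV :: 'b set))) \<in> ?Y"
      using is_dist_uniform by simp
    then show "?Y \<noteq> {}"
      by (metis empty_iff)
    show "is_dist q"
      by (fact q)
    show "\<bar>v \<sigma> l \<tau>l\<bar> \<le> real T * max_abs_payoff M"
      if "\<sigma> \<in> {\<sigma>. valid1 \<sigma>}" "\<tau>l \<in> ?Y" for \<sigma> l \<tau>l
      unfolding v_def using p that by (auto intro!: is_dist_abs_sum_le abs_cpay_le simp: valid2_def)
  qed
  have profiles: "{\<tau>. valid2 \<tau>} = {\<tau>. \<forall>l. \<tau> l \<in> ?Y}"
    by (simp add: valid2_def)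
  have security: "security1 M T p q \<sigma> \<longleftrightarrow>
      \<sigma> \<in> {\<sigma>. valid1 \<sigma>} \<and> G.guarantee \<sigma> = (SUP \<sigma>'\<in>{\<sigma>. valid1 \<sigma>}. G.guarantee \<sigma>')" for \<sigma>
    by (simp add: security1_def G.guarantee_def profiles payoff_eq_sum_player2_types v_def)
  have u0: "u0 M T p \<sigma> = G.type_value \<sigma>" for \<sigma>
    by (simp add: fun_eq_iff u0_def G.type_value_def v_def)
  have "dual_security1 M T p \<nu> \<sigma> \<longleftrightarrow> \<sigma> \<in> {\<sigma>. valid1 \<sigma>} \<and>
      G.dual_guarantee \<nu> \<sigma> = (SUP \<sigma>'\<in>{\<sigma>. valid1 \<sigma>}. G.dual_guarantee \<nu> \<sigma>')" for \<nu> \<sigma>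
    by (simp add: dual_security1_def G.dual_guarantee_def profiles dpay2_eq_sum_types[OF p] v_def)
  then show ?thesis
    using G.dual_optimal_imp_optimal sec dual unfolding security u0 by blast
qed

lemma dual_security2_imp_security2:
  fixes M :: "'k::finite \<Rightarrow> 'l::finite \<Rightarrow> 'a::finite \<Rightarrow> 'b::finite \<Rightarrow> real"
  assumes p: "is_dist p" and q: "is_dist q"
    and sec: "security2 M T p q \<tau>s"
    and dual: "dual_security2 M T (\<lambda>k. - w0 M T q \<tau>s k) q \<tau>d"
  shows "security2 M T p q \<tau>d"
proof -
  let ?Y = "{\<sigma>k :: 'a list \<Rightarrow> 'b list \<Rightarrow> 'a \<Rightarrow> real. \<forall>hA hB. is_dist (\<sigma>k hA hB)}"
  define v where "v \<tau> k \<sigma>k = - (\<Sum>l\<in>UNIV. q l * cpay M (\<lambda>_. \<sigma>k) \<tau> k l T [] [])"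
    for \<tau> and k :: 'k and \<sigma>k
  interpret G: typewise_game "{\<tau>. valid2 \<tau>}" ?Y v p "real T * max_abs_payoff M"
  proof
    have "(\<lambda>_ _. \<lambda>_. 1 / real (card (UNIV :: 'a set))) \<in> ?Y"
      using is_dist_uniform by simp
    then show "?Y \<noteq> {}"
      by (metis empty_iff)
    show "is_dist p"
      by (fact p)
    show "\<bar>v \<tau> k \<sigma>k\<bar> \<le> real T * max_abs_payoff M"
      if "\<tau> \<in> {\<tau>. valid2 \<tau>}" "\<sigma>k \<in> ?Y" for \<tau> k \<sigma>k
      unfolding v_def abs_minus_cancel using q that
      by (auto intro!: is_dist_abs_sum_le abs_cpay_le simp: valid1_def)
  qed
  have profiles: "{\<sigma>. valid1 \<sigma>} = {\<sigma>. \<forall>k. \<sigma> k \<in> ?Y}"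
    by (simp add: valid1_def)
  have best_reply: "(SUP \<sigma>\<in>{\<sigma>. valid1 \<sigma>}. payoff M T p q \<sigma> \<tau>) = - G.guarantee \<tau>" for \<tau>
    by (simp add: G.guarantee_def profiles payoff_eq_sum_player1_types v_def sum_negf
        flip: SUP_uminus_real)
  have security: "security2 M T p q \<tau> \<longleftrightarrow>
      \<tau> \<in> {\<tau>. valid2 \<tau>} \<and> G.guarantee \<tau> = (SUP \<tau>'\<in>{\<tau>. valid2 \<tau>}. G.guarantee \<tau>')" for \<tau>
    by (simp add: security2_def best_reply INF_uminus_real)
  have w0: "w0 M T q \<tau> = (\<lambda>k. - G.type_value \<tau> k)" for \<tau>
    by (simp add: fun_eq_iff w0_def G.type_value_def v_def flip: SUP_uminus_real)
  have dpay1: "dpay1 M T \<mu> q \<rho> \<sigma> \<tau> = - (\<Sum>k\<in>UNIV. \<rho> k * (- \<mu> k + v \<tau> k (\<sigma> k)))"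
    for \<mu> \<rho> \<sigma> \<tau>
  proof -
    have "\<rho> k * (- \<mu> k + v \<tau> k (\<sigma> k))
        = - (\<rho> k * (\<mu> k + (\<Sum>l\<in>UNIV. q l * cpay M (\<lambda>_. \<sigma> k) \<tau> k l T [] [])))" for k
      by (simp add: v_def algebra_simps)
    then show ?thesis
      by (simp add: dpay1_eq_sum_types[OF q] sum_negf)
  qed
  have dual_best_reply: "(SUP z\<in>{\<rho>. is_dist \<rho>} \<times> {\<sigma>. valid1 \<sigma>}. dpay1 M T \<mu> q (fst z) (snd z) \<tau>)
      = - G.dual_guarantee (\<lambda>k. - \<mu> k) \<tau>" for \<mu> \<tau>
    by (simp only: G.dual_guarantee_def profiles dpay1 SUP_uminus_real)
  have "dual_security2 M T \<mu> q \<tau> \<longleftrightarrow> \<tau> \<in> {\<tau>. valid2 \<tau>} \<and>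
      G.dual_guarantee (\<lambda>k. - \<mu> k) \<tau>
        = (SUP \<tau>'\<in>{\<tau>. valid2 \<tau>}. G.dual_guarantee (\<lambda>k. - \<mu> k) \<tau>')" for \<mu> \<tau>
    by (simp add: dual_security2_def dual_best_reply INF_uminus_real)
  with dual have "\<tau>d \<in> {\<tau>. valid2 \<tau>} \<and> G.dual_guarantee (\<lambda>k. - G.type_value \<tau>s k) \<tau>d
      = (SUP \<tau>'\<in>{\<tau>. valid2 \<tau>}. G.dual_guarantee (\<lambda>k. - G.type_value \<tau>s k) \<tau>')"
    unfolding w0 by simp
  then show ?thesis
    using G.dual_optimal_imp_optimal[of \<tau>s \<tau>d] sec unfolding security by blast
qed

theorem corollary1:
  fixes M :: "'k::finite \<Rightarrow> 'l::finite \<Rightarrow> 'a::finite \<Rightarrow> 'b::finite \<Rightarrow> real"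
    and T :: nat and p :: "'k \<Rightarrow> real" and q :: "'l \<Rightarrow> real"
  assumes "is_dist p" and "\<forall>k. 0 < p k"
    and "is_dist q" and "\<forall>l. 0 < q l"
  shows "(\<forall>\<sigma>s \<sigma>d. security1 M T p q \<sigma>s \<and>
            dual_security1 M T p (\<lambda>l. - u0 M T p \<sigma>s l) \<sigma>d \<and>
            markov1 M T p (\<lambda>l. - u0 M T p \<sigma>s l) \<sigma>d
            \<longrightarrow> security1 M T p q \<sigma>d)
       \<and> (\<forall>\<tau>s \<tau>d. security2 M T p q \<tau>s \<and>
            dual_security2 M T (\<lambda>k. - w0 M T q \<tau>s k) q \<tau>d \<and>
            markov2 M T (\<lambda>k. - w0 M T q \<tau>s k) q \<tau>d
            \<longrightarrow> security2 M T p q \<tau>d)"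
  using dual_security1_imp_security1[OF assms(1,3)] dual_security2_imp_security2[OF assms(1,3)]
  by blast

end
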